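(* Let $A=\{a_1,\dots,a_n\}$ with $n\ge2$. Then $CT(A^{\ast})/I_f(A^{\ast})\cong C_n$.
   Context: $A^{\ast}$ is the free monoid on $A$; $A^{\omega}$ is the set of right-infinite strings over $A$. For $x,y\in A^\ast$, $x\le_p y$ if $x=yz$ for some $z$; a prefix code is a set of pairwise $\le_p$-incomparable strings. A definite language is $X\cup YA^{\ast}$ with $X,Y$ finite; $x\in L$ is unbounded if $xA^{\ast}\subseteq L$, bounded otherwise. A permissible map is a bijection between definite languages preserving boundedness and unboundedness with $\alpha(xy)=\alpha(x)y$ for unbounded $x$ and all $y\in A^\ast$. $CT(A^{\ast})$ is the set of permissible maps (an inverse monoid of partial bijections of $A^\ast$; it is a Boolean inverse $\wedge$-monoid). $I_f(A^{\ast})$ is the set of all bijections between finite subsets of $A^{\ast}$, an additive ideal of $CT(A^{\ast})$ (a semigroup ideal closed under joins of compatible pairs). For a Boolean inverse $\wedge$-semigroup $S$ and additive ideal $I$, $S/I$ denotes $S/\varepsilon_I$ where $(a,b)\in\varepsilon_I$ iff $a\setminus(a\wedge b)\in I$ and $b\setminus(a\wedge b)\in I$; here for $c\le a$, $a\setminus c=a(\mathbf{d}(a)\setminus\mathbf{d}(c))$ with $\mathbf{d}(a)=a^{-1}a$ and $\setminus$ on idempotents the Boolean relative complement. The Cuntz inverse monoid $C_n$ consists of all bijections $f\colon XA^{\omega}\to YA^{\omega}$, with $X,Y$ finite prefix codes, for which there is a bijection $f_1\colon X\to Y$ with $f(xw)=f_1(x)w$ for all $x\in X$, $w\in A^{\omega}$,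 under composition of partial bijections of $A^\omega$. *)

theory Defs
  imports Main "HOL-Library.Omega_Words_Fun" "HOL-Library.Sublist"
begin

text \<open>Partial bijections are maps 'b => 'b option; the product ab of the inverse
semigroup is the map composition a o_m b (apply b first, then a).\<close>

definition omega_strings :: "'a set \<Rightarrow> 'a word set" where
  "omega_strings A = {w. \<forall>i. w i \<in> A}"

definition definite :: "'a set \<Rightarrow> 'a list set \<Rightarrow> bool" where
  "definite A L \<longleftrightarrow> (\<exists>X Y. finite X \<and> finite Y \<and> X \<subseteq> lists A \<and> Y \<subseteq> lists A \<and>
      L = X \<union> {y @ z | y z. y \<in> Y \<and> z \<in> lists A})"

definition unbounded :: "'a set \<Rightarrow> 'a list set \<Rightarrow> 'a list \<Rightarrow> bool" where
  "unbounded A L x \<longleftrightarrow> x \<in> L \<and> {x @ z | z. z \<in> lists A} \<subseteq> L"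

definition permissible :: "'a set \<Rightarrow> ('a list \<Rightarrow> 'a list option) \<Rightarrow> bool" where
  "permissible A \<alpha> \<longleftrightarrow>
     definite A (dom \<alpha>) \<and> definite A (ran \<alpha>) \<and> inj_on \<alpha> (dom \<alpha>) \<and>
     (\<forall>x\<in>dom \<alpha>. unbounded A (dom \<alpha>) x \<longleftrightarrow> unbounded A (ran \<alpha>) (the (\<alpha> x))) \<and>
     (\<forall>x\<in>dom \<alpha>. unbounded A (dom \<alpha>) x \<longrightarrow>
        (\<forall>y\<in>lists A. \<alpha> (x @ y) = Some (the (\<alpha> x) @ y)))"

definition CT :: "'a set \<Rightarrow> ('a list \<Rightarrow> 'a list option) set" where
  "CT A = {\<alpha>. permissible A \<alpha>}"

definition If :: "'a set \<Rightarrow> ('a list \<Rightarrow> 'a list option) set" where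
  "If A = {f. finite (dom f) \<and> dom f \<subseteq> lists A \<and> ran f \<subseteq> lists A \<and> inj_on f (dom f)}"

text \<open>Generic inverse-semigroup notions for a set S of partial bijections,
ordered by the natural partial order (restriction, i.e. map_le).\<close>

definition pinv :: "('b \<Rightarrow> 'b option) \<Rightarrow> ('b \<Rightarrow> 'b option)" where
  "pinv a = (\<lambda>y. if y \<in> ran a then Some (THE x. a x = Some y) else None)"

definition dd :: "('b \<Rightarrow> 'b option) \<Rightarrow> ('b \<Rightarrow> 'b option)" where
  "dd a = pinv a \<circ>\<^sub>m a"

definition idems :: "('b \<Rightarrow> 'b option) set \<Rightarrow> ('b \<Rightarrow> 'b option) set" where
  "idems S = {e\<in>S. e \<circ>\<^sub>m e = e}"

definition glb_in :: "('b \<Rightarrow> 'b option) set \<Rightarrow> ('b \<Rightarrow> 'b option) \<Rightarrow> ('b \<Rightarrow> 'b option) \<Rightarrow> ('b \<Rightarrow> 'b option)" where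
  "glb_in S a b = (THE c. c \<in> S \<and> c \<subseteq>\<^sub>m a \<and> c \<subseteq>\<^sub>m b \<and>
                       (\<forall>d\<in>S. d \<subseteq>\<^sub>m a \<and> d \<subseteq>\<^sub>m b \<longrightarrow> d \<subseteq>\<^sub>m c))"

definition lub_in :: "('b \<Rightarrow> 'b option) set \<Rightarrow> ('b \<Rightarrow> 'b option) \<Rightarrow> ('b \<Rightarrow> 'b option) \<Rightarrow> ('b \<Rightarrow> 'b option)" where
  "lub_in S a b = (THE c. c \<in> S \<and> a \<subseteq>\<^sub>m c \<and> b \<subseteq>\<^sub>m c \<and>
                       (\<forall>d\<in>S. a \<subseteq>\<^sub>m d \<and> b \<subseteq>\<^sub>m d \<longrightarrow> c \<subseteq>\<^sub>m d))"

text \<open>Boolean relative complement e \ f of idempotents (f \<le> e) in the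
generalized Boolean algebra of idempotents of S (zero = empty map).\<close>
definition rel_compl :: "('b \<Rightarrow> 'b option) set \<Rightarrow> ('b \<Rightarrow> 'b option) \<Rightarrow> ('b \<Rightarrow> 'b option) \<Rightarrow> ('b \<Rightarrow> 'b option)" where
  "rel_compl S e f = (THE g. g \<in> idems S \<and> g \<subseteq>\<^sub>m e \<and> glb_in (idems S) g f = Map.empty \<and>
                             lub_in (idems S) g f = e)"

definition sdiff :: "('b \<Rightarrow> 'b option) set \<Rightarrow> ('b \<Rightarrow> 'b option) \<Rightarrow> ('b \<Rightarrow> 'b option) \<Rightarrow> ('b \<Rightarrow> 'b option)" where
  "sdiff S a c = a \<circ>\<^sub>m rel_compl S (dd a) (dd c)"

definition epsI :: "('b \<Rightarrow> 'b option) set \<Rightarrow> ('b \<Rightarrow> 'b option) set \<Rightarrow> (('b \<Rightarrow> 'b option) \<times> ('b \<Rightarrow> 'b option)) set" where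
  "epsI S I = {(a, b). a \<in> S \<and> b \<in> S \<and>
                 sdiff S a (glb_in S a b) \<in> I \<and> sdiff S b (glb_in S a b) \<in> I}"

definition prefix_code :: "'a list set \<Rightarrow> bool" where
  "prefix_code X \<longleftrightarrow> (\<forall>x\<in>X. \<forall>y\<in>X. x \<noteq> y \<longrightarrow> \<not> prefix x y)"

definition cyl :: "'a set \<Rightarrow> 'a list set \<Rightarrow> 'a word set" where
  "cyl A X = {x \<frown> w | x w. x \<in> X \<and> w \<in> omega_strings A}"

definition Cuntz :: "'a set \<Rightarrow> ('a word \<Rightarrow> 'a word option) set" where
  "Cuntz A = {f. \<exists>X Y. finite X \<and> finite Y \<and> X \<subseteq> lists A \<and> Y \<subseteq> lists A \<and>
                 prefix_code X \<and> prefix_code Y \<and>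
                 dom f = cyl A X \<and> ran f = cyl A Y \<and> inj_on f (dom f) \<and>
                 (\<exists>f1. bij_betw f1 X Y \<and>
                    (\<forall>x\<in>X. \<forall>w\<in>omega_strings A. f (x \<frown> w) = Some (f1 x \<frown> w)))}"

end

theory Submission
  imports Defs
begin

text \<open>
  The domain of a permissible map a is determined by prefixes of some length N, and a acts on
  strings of length at least N through their first N letters: a(xy) = a(x) y. Hence a induces
  a partial bijection of A^omega, w = u w' \<mapsto> a(u) w' for u a long enough prefix of w, which
  lies in C_n (take for X the strings of length N in the domain). This action is multiplicative,
  and onto because a bijection f of prefix codes extends to the permissible map x z \<mapsto> f(x) z.

  The meet of a and b in CT(A*) is a restricted to the strings where a and b agree, and
  a \ (a \<and> b) is a restricted to the remaining ones; so a and b are congruent iff they disagree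
  on only finitely many strings. A disagreement at a long string propagates to all its
  extensions, so finitely many disagreements means equal actions; conversely, equal actions
  force agreement on long strings, since two distinct letters separate u from v as soon as
  u w = v w for all infinite w. Thus the quotient is isomorphic to the image C_n.
\<close>

section \<open>Definite languages\<close>

abbreviation extensions :: "'a set \<Rightarrow> 'a list set \<Rightarrow> 'a list set" where
  "extensions A X \<equiv> {x @ z | x z. x \<in> X \<and> z \<in> lists A}"

definition prefix_determined :: "'a set \<Rightarrow> nat \<Rightarrow> 'a list set \<Rightarrow> bool" where
  "prefix_determined A N L \<longleftrightarrow> (\<forall>x\<in>lists A. N \<le> length x \<longrightarrow> (x \<in> L \<longleftrightarrow> take N x \<in> L))"

lemma prefix_determinedD:
  "prefix_determined A N L \<Longrightarrow> x \<in> lists A \<Longrightarrow> N \<le> length x \<Longrightarrow> x \<in> L \<longleftrightarrow> take N x \<in> L"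
  unfolding prefix_determined_def by blast

lemma take_in_lists: "x \<in> lists A \<Longrightarrow> take n x \<in> lists A"
  by (meson in_lists_conv_set in_set_takeD)

lemma drop_in_lists: "x \<in> lists A \<Longrightarrow> drop n x \<in> lists A"
  by (meson in_lists_conv_set in_set_dropD)

lemma append_in_extensions: "y \<in> Y \<Longrightarrow> z \<in> lists A \<Longrightarrow> y @ z \<in> extensions A Y"
  by blast

lemma prefix_determined_mono:
  assumes "prefix_determined A N L" and "N \<le> M"
  shows "prefix_determined A M L"
  unfolding prefix_determined_def
proof (intro ballI impI)
  fix x assume x: "x \<in> lists A" "M \<le> length x"
  have "x \<in> L \<longleftrightarrow> take N x \<in> L"
    using prefix_determinedD[OF assms(1) x(1)] x(2) assms(2) by simp
  also have "\<dots> \<longleftrightarrow> take N (take M x) \<in> L"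
    using assms(2) by (simp add: min_absorb1)
  also have "\<dots> \<longleftrightarrow> take M x \<in> L"
    using prefix_determinedD[OF assms(1) take_in_lists[OF x(1), of M]] x(2) assms(2) by simp
  finally show "x \<in> L \<longleftrightarrow> take M x \<in> L" .
qed

lemma definite_prefix_determined:
  assumes "definite A L"
  obtains N where "L \<subseteq> lists A" and "prefix_determined A N L"
proof -
  obtain X Y where XY: "finite X" "finite Y" "X \<subseteq> lists A" "Y \<subseteq> lists A"
    and L: "L = X \<union> extensions A Y"
    using assms unfolding definite_def by blast
  have "finite (length ` (X \<union> Y))" using XY(1,2) by simp
  then obtain N where N: "\<And>u. u \<in> X \<union> Y \<Longrightarrow> length u < N"
    unfolding finite_nat_set_iff_bounded by blast
  have "L \<subseteq> lists A"
  proof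
    fix x assume "x \<in> L"
    then consider "x \<in> X" | y z where "x = y @ z" "y \<in> Y" "z \<in> lists A" unfolding L by blast
    then show "x \<in> lists A" using XY(3,4) by cases auto
  qed
  moreover have "prefix_determined A N L"
    unfolding prefix_determined_def
  proof (intro ballI impI)
    fix x assume x: "x \<in> lists A" "N \<le> length x"
    have long: "x \<notin> X" "take N x \<notin> X" using N[of x] N[of "take N x"] x(2) by auto
    have ext: "x \<in> extensions A Y \<longleftrightarrow> take N x \<in> extensions A Y"
    proof
      assume "x \<in> extensions A Y"
      then obtain y z where yz: "x = y @ z" "y \<in> Y" "z \<in> lists A" by blast
      then have "take N x = y @ take (N - length y) z" using N[of y] by simp
      then show "take N x \<in> extensions A Y"
        using append_in_extensions[OF yz(2) take_in_lists[OF yz(3)]] by simp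
    next
      assume "take N x \<in> extensions A Y"
      then obtain y z where yz: "take N x = y @ z" "y \<in> Y" by blast
      have x_eq: "x = y @ (z @ drop N x)" using yz(1) append_take_drop_id[of N x] by simp
      have "z @ drop N x \<in> lists A"
        using take_in_lists[OF x(1), of N] drop_in_lists[OF x(1), of N] yz(1) by simp
      from append_in_extensions[OF yz(2) this]
      show "x \<in> extensions A Y" unfolding x_eq[symmetric] .
    qed
    show "x \<in> L \<longleftrightarrow> take N x \<in> L" by (simp only: L Un_iff long ext simp_thms)
  qed
  ultimately show ?thesis using that by blast
qed

lemma prefix_determined_definite:
  assumes "finite A" and "L \<subseteq> lists A" and "prefix_determined A N L"
  shows "definite A L"
proof -
  define X where "X = {x\<in>L. length x < N}"
  define Y where "Y = {x\<in>L. length x = N}"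
  have short: "finite {x\<in>L. length x \<le> N}"
    by (rule finite_subset[OF _ finite_lists_length_le[OF assms(1), of N]])
       (use assms(2) in \<open>auto simp: in_lists_conv_set\<close>)
  have L_eq: "L = X \<union> extensions A Y"
  proof (intro equalityI subsetI)
    fix x assume x: "x \<in> L"
    show "x \<in> X \<union> extensions A Y"
    proof (cases "length x < N")
      case False
      have xA: "x \<in> lists A" using x assms(2) by blast
      then have "take N x \<in> Y"
        using prefix_determinedD[OF assms(3) xA] x False unfolding Y_def by simp
      then have "take N x @ drop N x \<in> extensions A Y"
        by (rule append_in_extensions[OF _ drop_in_lists[OF xA]])
      then show ?thesis by simp
    qed (use x X_def in simp)
  next
    fix x assume "x \<in> X \<union> extensions A Y"
    then consider "x \<in> X" | y z where "x = y @ z" "y \<in> Y" "z \<in> lists A" by blast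
    then show "x \<in> L"
    proof cases
      case 2
      then have "x \<in> lists A" "take N x = y" "N \<le> length x"
        using assms(2) unfolding Y_def by auto
      moreover have "y \<in> L" using \<open>y \<in> Y\<close> unfolding Y_def by blast
      ultimately show ?thesis using prefix_determinedD[OF assms(3), of x] by simp
    qed (simp add: X_def)
  qed
  have "finite X" "finite Y"
    by (rule finite_subset[OF _ short], force simp: X_def Y_def)+
  moreover have "X \<subseteq> lists A" "Y \<subseteq> lists A"
    using assms(2) unfolding X_def Y_def by auto
  ultimately show ?thesis
    unfolding definite_def by (intro exI[of _ X] exI[of _ Y]) (simp add: L_eq[symmetric])
qed

lemma definite_Int_Un_Diff:
  assumes "finite A" and "definite A L1" and "definite A L2"
  shows "definite A (L1 \<inter> L2)" and "definite A (L1 \<union> L2)" and "definite A (L1 - L2)"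
proof -
  obtain N1 where L1: "L1 \<subseteq> lists A" "prefix_determined A N1 L1"
    using definite_prefix_determined[OF assms(2)] by blast
  obtain N2 where L2: "L2 \<subseteq> lists A" "prefix_determined A N2 L2"
    using definite_prefix_determined[OF assms(3)] by blast
  have "prefix_determined A (max N1 N2) L1" "prefix_determined A (max N1 N2) L2"
    using prefix_determined_mono[OF L1(2), of "max N1 N2"]
      prefix_determined_mono[OF L2(2), of "max N1 N2"] by simp_all
  then have N: "prefix_determined A (max N1 N2) (L1 \<inter> L2)"
    "prefix_determined A (max N1 N2) (L1 \<union> L2)" "prefix_determined A (max N1 N2) (L1 - L2)"
    by (auto simp: prefix_determined_def)
  show "definite A (L1 \<inter> L2)"
    by (rule prefix_determined_definite[OF assms(1) _ N(1)]) (use L1(1) in blast)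
  show "definite A (L1 \<union> L2)"
    by (rule prefix_determined_definite[OF assms(1) _ N(2)]) (use L1(1) L2(1) in blast)
  show "definite A (L1 - L2)"
    by (rule prefix_determined_definite[OF assms(1) _ N(3)]) (use L1(1) in blast)
qed

lemma extensions_unbounded:
  assumes "v \<in> extensions A X"
  shows "unbounded A (extensions A X) v"
proof -
  obtain x z where v: "v = x @ z" "x \<in> X" "z \<in> lists A" using assms by blast
  have "v @ z' \<in> extensions A X" if "z' \<in> lists A" for z'
    using append_in_extensions[OF v(2), of "z @ z'" A] v(1,3) that by simp
  then show ?thesis using assms unfolding unbounded_def by blast
qed

lemma definite_extensions: "finite X \<Longrightarrow> X \<subseteq> lists A \<Longrightarrow> definite A (extensions A X)"
  unfolding definite_def by (intro exI[of _ "{}"] exI[of _ X]) simp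

section \<open>Permissible maps\<close>

lemma
  assumes "a \<in> CT A"
  shows CT_dom_definite: "definite A (dom a)"
    and CT_ran_definite: "definite A (ran a)"
    and CT_inj: "inj_on a (dom a)"
    and CT_unbounded_iff: "x \<in> dom a \<Longrightarrow> unbounded A (dom a) x \<longleftrightarrow> unbounded A (ran a) (the (a x))"
    and CT_append:
      "x \<in> dom a \<Longrightarrow> unbounded A (dom a) x \<Longrightarrow> z \<in> lists A \<Longrightarrow> a (x @ z) = Some (the (a x) @ z)"
  using assms unfolding CT_def permissible_def by auto

lemma CT_dom_lists: "a \<in> CT A \<Longrightarrow> dom a \<subseteq> lists A"
  using definite_prefix_determined[OF CT_dom_definite] by blast

lemma CT_ran_lists: "a \<in> CT A \<Longrightarrow> ran a \<subseteq> lists A"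
  using definite_prefix_determined[OF CT_ran_definite] by blast

lemma inj_on_dom_SomeD: "inj_on a (dom a) \<Longrightarrow> a x = Some y \<Longrightarrow> a x' = Some y \<Longrightarrow> x = x'"
  by (rule inj_onD[of a "dom a"]) auto

lemma unboundedD: "unbounded A L x \<Longrightarrow> z \<in> lists A \<Longrightarrow> x @ z \<in> L"
  unfolding unbounded_def by blast

lemma unbounded_mono: "unbounded A L x \<Longrightarrow> L \<subseteq> L' \<Longrightarrow> unbounded A L' x"
  unfolding unbounded_def by blast

lemma unbounded_if_append_action:
  assumes "\<And>z. z \<in> lists A \<Longrightarrow> f (x @ z) = Some (v @ z)"
  shows "unbounded A (dom f) x" and "unbounded A (ran f) v"
proof -
  have dom: "x @ z \<in> dom f" and ran: "v @ z \<in> ran f" if "z \<in> lists A" for z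
    using assms[OF that] by (simp_all add: domI ranI)
  have "[] \<in> lists A" by simp
  from dom[OF this] ran[OF this] show "unbounded A (dom f) x" "unbounded A (ran f) v"
    unfolding unbounded_def using dom ran by auto
qed

lemma prefix_determined_unbounded:
  assumes "prefix_determined A N L" and "L \<subseteq> lists A" and "x \<in> L" and "N \<le> length x"
  shows "unbounded A L x"
  unfolding unbounded_def
proof (intro conjI subsetI)
  fix v assume "v \<in> {x @ z | z. z \<in> lists A}"
  then obtain z where z: "v = x @ z" "z \<in> lists A" by blast
  have xA: "x \<in> lists A" using assms(2,3) by blast
  have "v \<in> L \<longleftrightarrow> take N v \<in> L"
    using prefix_determinedD[OF assms(1), of v] xA z assms(4) by simp
  moreover have "take N v = take N x" using z(1) assms(4) by simp
  ultimately show "v \<in> L"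
    using prefix_determinedD[OF assms(1) xA assms(4)] assms(3) by simp
qed (fact assms(3))

lemma CT_prefix_determined_dom:
  assumes "a \<in> CT A"
  obtains N where "prefix_determined A N (dom a)"
  using definite_prefix_determined[OF CT_dom_definite[OF assms]] by blast

lemma CT_long_unbounded:
  assumes "a \<in> CT A" and "prefix_determined A N (dom a)" and "x \<in> dom a" and "N \<le> length x"
  shows "unbounded A (dom a) x"
  using prefix_determined_unbounded[OF assms(2) CT_dom_lists[OF assms(1)] assms(3,4)] .

lemma CT_long_append:
  assumes "a \<in> CT A" and "prefix_determined A N (dom a)" and "x \<in> dom a" and "N \<le> length x"
    and "z \<in> lists A"
  shows "a (x @ z) = Some (the (a x) @ z)"
  using CT_append[OF assms(1,3) CT_long_unbounded[OF assms(1-4)] assms(5)] .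

lemma CT_take_drop:
  assumes "a \<in> CT A" and "prefix_determined A N (dom a)" and "x \<in> dom a" and "N \<le> length x"
  shows "take N x \<in> dom a" and "a x = Some (the (a (take N x)) @ drop N x)"
proof -
  have xA: "x \<in> lists A" using assms(3) CT_dom_lists[OF assms(1)] by blast
  show t: "take N x \<in> dom a" using prefix_determinedD[OF assms(2) xA assms(4)] assms(3) by simp
  have "a (take N x @ drop N x) = Some (the (a (take N x)) @ drop N x)"
    by (rule CT_long_append[OF assms(1,2) t _ drop_in_lists[OF xA]]) (use assms(4) in simp)
  then show "a x = Some (the (a (take N x)) @ drop N x)" by simp
qed

lemma common_prefix_determined:
  assumes "a \<in> CT A" and "b \<in> CT A"
  obtains N where "prefix_determined A N (dom a)" and "prefix_determined A N (dom b)"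
proof -
  obtain Na where Na: "prefix_determined A Na (dom a)" using CT_prefix_determined_dom[OF assms(1)] .
  obtain Nb where Nb: "prefix_determined A Nb (dom b)" using CT_prefix_determined_dom[OF assms(2)] .
  show ?thesis
    by (rule that[OF prefix_determined_mono[OF Na, of "max Na Nb"] prefix_determined_mono[OF Nb]])
      simp_all
qed

lemma option_eq_SomeI: "(\<And>v. p = Some v \<longleftrightarrow> q = Some v) \<Longrightarrow> p = q"
  by (cases p; cases q) auto

lemma pinv_Some_iff:
  assumes "inj_on a (dom a)"
  shows "pinv a y = Some x \<longleftrightarrow> a x = Some y"
proof
  assume h: "pinv a y = Some x"
  then obtain x0 where x0: "a x0 = Some y" unfolding pinv_def ran_def by (auto split: if_splits)
  then have "(THE x. a x = Some y) = x0" using inj_on_dom_SomeD[OF assms] by blast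
  then show "a x = Some y" using h x0 unfolding pinv_def by (simp add: ranI)
next
  assume h: "a x = Some y"
  then have "(THE x'. a x' = Some y) = x" using inj_on_dom_SomeD[OF assms] by blast
  then show "pinv a y = Some x" using h unfolding pinv_def by (simp add: ranI)
qed

lemma dom_pinv: "dom (pinv a) = ran a"
  unfolding pinv_def dom_def by auto

lemma ran_pinv: "inj_on a (dom a) \<Longrightarrow> ran (pinv a) = dom a"
  by (auto simp: ran_def dom_def pinv_Some_iff)

lemma inj_on_pinv: "inj_on a (dom a) \<Longrightarrow> inj_on (pinv a) (dom (pinv a))"
  by (rule inj_onI) (auto simp: pinv_Some_iff)

lemma dd_eq_restrict:
  assumes "inj_on a (dom a)"
  shows "dd a = Some |` dom a"
proof
  fix x show "dd a x = (Some |` dom a) x"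
  proof (cases "a x")
    case (Some y)
    then have "pinv a y = Some x" using pinv_Some_iff[OF assms] by blast
    then show ?thesis using Some by (simp add: dd_def domI)
  qed (simp add: dd_def domIff)
qed

lemma pinv_CT:
  assumes a: "a \<in> CT A"
  shows "pinv a \<in> CT A"
  unfolding CT_def permissible_def
proof (intro CollectI conjI ballI impI)
  note inj = CT_inj[OF a]
  show "definite A (dom (pinv a))" "definite A (ran (pinv a))"
    using CT_ran_definite[OF a] CT_dom_definite[OF a] by (simp_all add: dom_pinv ran_pinv[OF inj])
  show "inj_on (pinv a) (dom (pinv a))" by (rule inj_on_pinv[OF inj])
  fix y assume "y \<in> dom (pinv a)"
  then obtain x where x: "pinv a y = Some x" by blast
  then have ax: "a x = Some y" using pinv_Some_iff[OF inj] by blast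
  show unb: "unbounded A (dom (pinv a)) y \<longleftrightarrow> unbounded A (ran (pinv a)) (the (pinv a y))"
    using CT_unbounded_iff[OF a, of x] ax x by (simp add: domI dom_pinv ran_pinv[OF inj])
  fix z assume "unbounded A (dom (pinv a)) y" and z: "z \<in> lists A"
  with unb have "a (x @ z) = Some (y @ z)"
    using CT_append[OF a _ _ z, of x] ax x by (simp add: domI ran_pinv[OF inj])
  then have "pinv a (y @ z) = Some (x @ z)" using pinv_Some_iff[OF inj] by blast
  then show "pinv a (y @ z) = Some (the (pinv a y) @ z)" using x by simp
qed

lemma dom_map_comp: "dom (a \<circ>\<^sub>m b) = {x \<in> dom b. the (b x) \<in> dom a}"
  unfolding map_comp_def dom_def by (auto split: option.splits)

lemma inj_on_map_comp:
  assumes "inj_on a (dom a)" and "inj_on b (dom b)"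
  shows "inj_on (a \<circ>\<^sub>m b) (dom (a \<circ>\<^sub>m b))"
proof (rule inj_onI)
  fix x1 x2 assume x1: "x1 \<in> dom (a \<circ>\<^sub>m b)" and eq: "(a \<circ>\<^sub>m b) x1 = (a \<circ>\<^sub>m b) x2"
  obtain y where y: "(a \<circ>\<^sub>m b) x1 = Some y" using x1 by blast
  with eq have "(a \<circ>\<^sub>m b) x2 = Some y" by simp
  with y obtain u1 u2 where u: "b x1 = Some u1" "a u1 = Some y" "b x2 = Some u2" "a u2 = Some y"
    by (auto simp: map_comp_Some_iff)
  then have "u1 = u2" by (intro inj_on_dom_SomeD[OF assms(1)])
  then show "x1 = x2" using u by (intro inj_on_dom_SomeD[OF assms(2)]) auto
qed

lemma pinv_map_comp:
  assumes "inj_on a (dom a)" and "inj_on b (dom b)"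
  shows "pinv (a \<circ>\<^sub>m b) = pinv b \<circ>\<^sub>m pinv a"
proof (rule ext, rule option_eq_SomeI)
  fix y x
  show "pinv (a \<circ>\<^sub>m b) y = Some x \<longleftrightarrow> (pinv b \<circ>\<^sub>m pinv a) y = Some x"
    by (auto simp: pinv_Some_iff[OF inj_on_map_comp[OF assms]] pinv_Some_iff[OF assms(1)]
        pinv_Some_iff[OF assms(2)] map_comp_Some_iff)
qed

lemma prefix_determined_preimage:
  assumes b: "b \<in> CT A" and Nb: "prefix_determined A N (dom b)" and K: "prefix_determined A K L"
  shows "prefix_determined A (N + K) {x \<in> dom b. the (b x) \<in> L}"
  unfolding prefix_determined_def
proof (intro ballI impI)
  fix x assume xA: "x \<in> lists A" and len: "N + K \<le> length x"
  define t where "t = take (N + K) x"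
  have NK: "prefix_determined A (N + K) (dom b)" using prefix_determined_mono[OF Nb] by simp
  have dom_iff: "x \<in> dom b \<longleftrightarrow> t \<in> dom b" unfolding t_def by (rule prefix_determinedD[OF NK xA len])
  show "x \<in> {x \<in> dom b. the (b x) \<in> L} \<longleftrightarrow> take (N + K) x \<in> {x \<in> dom b. the (b x) \<in> L}"
  proof (cases "x \<in> dom b")
    case True
    then have tb: "t \<in> dom b" using dom_iff by blast
    have lt: "length t = N + K" "take N t = take N x"
      unfolding t_def using len by (simp_all add: min_def)
    define v where "v = the (b (take N x))"
    have bx: "the (b x) = v @ drop N x"
      using CT_take_drop(2)[OF b Nb True] len unfolding v_def by simp
    have bt: "the (b t) = v @ drop N t"
      using CT_take_drop(2)[OF b Nb tb] lt unfolding v_def by simp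
    have "K \<le> length (the (b x))" "K \<le> length (the (b t))" using bx bt len lt(1) by simp_all
    moreover have "the (b x) \<in> lists A" "the (b t) \<in> lists A"
      using CT_ran_lists[OF b] True tb by (auto intro: ranI)
    moreover have "drop N t = take K (drop N x)" unfolding t_def by (simp add: drop_take)
    then have "take K (the (b x)) = take K (the (b t))" unfolding bx bt by (simp add: min_def)
    ultimately have "the (b x) \<in> L \<longleftrightarrow> the (b t) \<in> L"
      using prefix_determinedD[OF K, of "the (b x)"] prefix_determinedD[OF K, of "the (b t)"]
      by simp
    then show ?thesis using True tb unfolding t_def by simp
  qed (use dom_iff t_def in simp)
qed

lemma dom_map_comp_definite:
  assumes "finite A" and a: "a \<in> CT A" and b: "b \<in> CT A"
  shows "definite A (dom (a \<circ>\<^sub>m b))"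
proof -
  obtain N where N: "prefix_determined A N (dom b)" using CT_prefix_determined_dom[OF b] .
  obtain K where K: "prefix_determined A K (dom a)" using CT_prefix_determined_dom[OF a] .
  show ?thesis
    unfolding dom_map_comp
    by (rule prefix_determined_definite[OF assms(1) _ prefix_determined_preimage[OF b N K]])
       (use CT_dom_lists[OF b] in blast)
qed

lemma map_comp_append:
  assumes a: "a \<in> CT A" and b: "b \<in> CT A" and x: "x \<in> dom (a \<circ>\<^sub>m b)"
    and unb: "unbounded A (dom (a \<circ>\<^sub>m b)) x" and z: "z \<in> lists A"
  shows "(a \<circ>\<^sub>m b) (x @ z) = Some (the ((a \<circ>\<^sub>m b) x) @ z)"
proof -
  obtain u v where u: "b x = Some u" "a u = Some v" using x by (auto simp: map_comp_Some_iff)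
  have "unbounded A (dom b) x" by (rule unbounded_mono[OF unb]) (auto simp: dom_map_comp)
  then have bz: "b (x @ z') = Some (u @ z')" if "z' \<in> lists A" for z'
    using CT_append[OF b _ _ that] u by (simp add: domI)
  have "u @ z' \<in> dom a" if "z' \<in> lists A" for z'
    using unboundedD[OF unb that] bz[OF that] by (simp add: dom_map_comp)
  then have "unbounded A (dom a) u" using u(2) unfolding unbounded_def by blast
  then have "a (u @ z) = Some (v @ z)" using CT_append[OF a _ _ z] u(2) by (simp add: domI)
  then show ?thesis using bz[OF z] u by simp
qed

lemma map_comp_CT:
  assumes fin: "finite A" and a: "a \<in> CT A" and b: "b \<in> CT A"
  shows "a \<circ>\<^sub>m b \<in> CT A"
  unfolding CT_def permissible_def
proof (intro CollectI conjI ballI impI)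
  let ?c = "a \<circ>\<^sub>m b"
  have inj: "inj_on ?c (dom ?c)" by (rule inj_on_map_comp[OF CT_inj[OF a] CT_inj[OF b]])
  have pinv_c: "pinv ?c = pinv b \<circ>\<^sub>m pinv a" by (rule pinv_map_comp[OF CT_inj[OF a] CT_inj[OF b]])
  note pa = pinv_CT[OF a] and pb = pinv_CT[OF b]
  show "definite A (dom ?c)" by (rule dom_map_comp_definite[OF fin a b])
  show "definite A (ran ?c)"
    using dom_map_comp_definite[OF fin pb pa] by (simp flip: pinv_c add: dom_pinv)
  show "inj_on ?c (dom ?c)" by (fact inj)
  show "?c (x @ z) = Some (the (?c x) @ z)"
    if "x \<in> dom ?c" "unbounded A (dom ?c) x" "z \<in> lists A" for x z
    by (rule map_comp_append[OF a b that])
  fix x assume x: "x \<in> dom ?c"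
  then obtain y where y: "?c x = Some y" by blast
  show "unbounded A (dom ?c) x \<longleftrightarrow> unbounded A (ran ?c) (the (?c x))"
  proof
    assume "unbounded A (dom ?c) x"
    then show "unbounded A (ran ?c) (the (?c x))"
      using unbounded_if_append_action(2)[of A ?c x] map_comp_append[OF a b x] by blast
  next
    (* the forward implication, applied to the inverse pinv b o_m pinv a of ?c *)
    assume "unbounded A (ran ?c) (the (?c x))"
    then have unb: "unbounded A (dom (pinv b \<circ>\<^sub>m pinv a)) y"
      using y by (simp flip: pinv_c add: dom_pinv)
    have "(pinv b \<circ>\<^sub>m pinv a) y = Some x" using y pinv_Some_iff[OF inj] pinv_c by simp
    then have "(pinv b \<circ>\<^sub>m pinv a) (y @ z) = Some (x @ z)" if "z \<in> lists A" for z
      using map_comp_append[OF pb pa _ unb that] by (simp add: domI)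
    then have "unbounded A (ran (pinv b \<circ>\<^sub>m pinv a)) x" by (rule unbounded_if_append_action(2))
    then show "unbounded A (dom ?c) x" by (simp flip: pinv_c add: ran_pinv[OF inj])
  qed
qed

section \<open>The action on infinite strings\<close>

abbreviation word_prefix :: "nat \<Rightarrow> 'a word \<Rightarrow> 'a list" where
  "word_prefix k w \<equiv> subsequence w 0 k"

abbreviation word_suffix :: "nat \<Rightarrow> 'a word \<Rightarrow> 'a word" where
  "word_suffix \<equiv> Omega_Words_Fun.suffix"

lemma conc_in_omega_strings: "u \<in> lists A \<Longrightarrow> s \<in> omega_strings A \<Longrightarrow> u \<frown> s \<in> omega_strings A"
  unfolding omega_strings_def conc_def by (auto simp: in_lists_conv_set)

lemma subsequence_in_lists: "w \<in> omega_strings A \<Longrightarrow> subsequence w i j \<in> lists A"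
  unfolding omega_strings_def by (auto simp: in_lists_conv_set)

lemma word_suffix_in_omega_strings: "w \<in> omega_strings A \<Longrightarrow> word_suffix k w \<in> omega_strings A"
  unfolding omega_strings_def by simp

text \<open>The map a \<mapsto> a^ of the paper. Any prefix of w that is unbounded in dom a may be used
  (see omega_map_unbounded); taking the shortest makes the definition canonical.\<close>

definition omega_map :: "'a set \<Rightarrow> ('a list \<Rightarrow> 'a list option) \<Rightarrow> 'a word \<Rightarrow> 'a word option" where
  "omega_map A a w =
     (if w \<in> omega_strings A \<and> (\<exists>k. unbounded A (dom a) (word_prefix k w))
      then let k = LEAST k. unbounded A (dom a) (word_prefix k w)
           in Some (the (a (word_prefix k w)) \<frown> word_suffix k w)
      else None)"

lemma omega_map_SomeD:
  "omega_map A a w = Some y \<Longrightarrow> w \<in> omega_strings A \<and> (\<exists>k. unbounded A (dom a) (word_prefix k w))"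
  unfolding omega_map_def by (auto split: if_splits)

lemma omega_map_outside: "w \<notin> omega_strings A \<Longrightarrow> omega_map A a w = None"
  unfolding omega_map_def by simp

lemma omega_map_unbounded:
  assumes a: "a \<in> CT A" and w: "w \<in> omega_strings A"
    and unb: "unbounded A (dom a) (word_prefix k w)"
  shows "omega_map A a w = Some (the (a (word_prefix k w)) \<frown> word_suffix k w)"
proof -
  let ?P = "\<lambda>k. unbounded A (dom a) (word_prefix k w)"
  define k0 where "k0 = (LEAST k. ?P k)"
  have unb0: "?P k0" unfolding k0_def by (rule LeastI[of ?P, OF unb])
  have le: "k0 \<le> k" unfolding k0_def by (rule Least_le[of ?P, OF unb])
  define d where "d = subsequence w k0 k"
  have split: "word_prefix k w = word_prefix k0 w @ d"
    unfolding d_def using subsequence_append[of w k0 "k - k0"] le by simp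
  have "a (word_prefix k w) = Some (the (a (word_prefix k0 w)) @ d)"
    unfolding split
    by (rule CT_append[OF a _ unb0])
      (use unb0 subsequence_in_lists[OF w] in \<open>auto simp: unbounded_def d_def\<close>)
  moreover have "d \<frown> word_suffix k w = word_suffix k0 w" unfolding d_def using le by simp
  moreover have "omega_map A a w = Some (the (a (word_prefix k0 w)) \<frown> word_suffix k0 w)"
    unfolding omega_map_def k0_def[symmetric] using w unb by auto
  ultimately show ?thesis by (metis conc_conc option.sel)
qed

lemma omega_map_conc:
  assumes a: "a \<in> CT A" and N: "prefix_determined A N (dom a)"
    and u: "u \<in> lists A" "N \<le> length u" and s: "s \<in> omega_strings A"
  shows "omega_map A a (u \<frown> s) = (if u \<in> dom a then Some (the (a u) \<frown> s) else None)"
proof (cases "u \<in> dom a")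
  case True
  have "unbounded A (dom a) (word_prefix (length u) (u \<frown> s))"
    using CT_long_unbounded[OF a N True u(2)] by simp
  from omega_map_unbounded[OF a conc_in_omega_strings[OF u(1) s] this] True show ?thesis by simp
next
  case False
  have "\<not> unbounded A (dom a) (word_prefix k (u \<frown> s))" for k
  proof
    assume k: "unbounded A (dom a) (word_prefix k (u \<frown> s))"
    show False
    proof (cases "k \<le> length u")
      case True
      then have "take k u @ drop k u \<in> dom a"
        using unboundedD[OF k drop_in_lists[OF u(1), of k]] by simp
      then show False using False by simp
    next
      case long: False
      define p where "p = u @ word_prefix (k - length u) s"
      have "p \<in> dom a" using k long unfolding unbounded_def p_def by simp
      moreover have "p \<in> lists A" unfolding p_def using u(1) subsequence_in_lists[OF s] by simp
      moreover have "take N p = take N u" "N \<le> length p" unfolding p_def using u(2) by simp_all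
      ultimately have "take N u \<in> dom a" using prefix_determinedD[OF N, of p] by simp
      then show False using False prefix_determinedD[OF N u] by simp
    qed
  qed
  then show ?thesis using False unfolding omega_map_def by simp
qed

lemma omega_map_prefix:
  assumes a: "a \<in> CT A" and N: "prefix_determined A N (dom a)" and w: "w \<in> omega_strings A"
  shows "omega_map A a w =
    (if word_prefix N w \<in> dom a then Some (the (a (word_prefix N w)) \<frown> word_suffix N w) else None)"
  using omega_map_conc[OF a N subsequence_in_lists[OF w, of 0 N] _
      word_suffix_in_omega_strings[OF w, of N]]
  by simp

lemma conc_eq_imp_prefix:
  assumes eq: "u \<frown> s = v \<frown> t" and len: "length u \<le> length v"
  shows "prefix u v"
proof -
  have "u = word_prefix (length u) (u \<frown> s)" by simp
  also have "\<dots> = take (length u) v" using len by (simp add: eq)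
  finally have "take (length u) v = u" ..
  then show ?thesis using take_is_prefix[of "length u" v] by simp
qed

lemma prefix_code_unique:
  assumes "prefix_code X" and "x \<in> X" "x' \<in> X" and "prefix x v" "prefix x' v"
  shows "x = x'"
proof (rule ccontr)
  assume "x \<noteq> x'"
  then have "\<not> prefix x x'" "\<not> prefix x' x" using assms(1-3) unfolding prefix_code_def by auto
  then show False using prefix_same_cases[OF assms(4,5)] by blast
qed

lemma prefix_code_conc_eq:
  assumes "prefix_code Y" and "y \<in> Y" "y' \<in> Y" and eq: "y \<frown> s = y' \<frown> s'"
  shows "y = y'"
proof (cases "length y \<le> length y'")
  case True
  then show ?thesis using assms(1-3) conc_eq_imp_prefix[OF eq] unfolding prefix_code_def by blast
next
  case False
  then show ?thesis
    using assms(1-3) conc_eq_imp_prefix[OF eq[symmetric]] unfolding prefix_code_def by auto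
qed

lemma prefix_code_same_length: "(\<And>x. x \<in> X \<Longrightarrow> length x = N) \<Longrightarrow> prefix_code X"
  unfolding prefix_code_def using prefix_length_prefix by fastforce

lemma conc_in_cyl: "x \<in> X \<Longrightarrow> s \<in> omega_strings A \<Longrightarrow> x \<frown> s \<in> cyl A X"
  unfolding cyl_def by blast

lemma cyl_same_length:
  assumes "\<And>x. x \<in> X \<Longrightarrow> length x = N" and "X \<subseteq> lists A"
  shows "w \<in> cyl A X \<longleftrightarrow> w \<in> omega_strings A \<and> word_prefix N w \<in> X"
proof
  assume "w \<in> cyl A X"
  then obtain x s where xs: "w = x \<frown> s" "x \<in> X" "s \<in> omega_strings A" unfolding cyl_def by blast
  moreover have "x \<in> lists A" using xs(2) assms(2) by blast
  ultimately show "w \<in> omega_strings A \<and> word_prefix N w \<in> X"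
    using assms(1)[OF xs(2)] conc_in_omega_strings by simp
next
  assume w: "w \<in> omega_strings A \<and> word_prefix N w \<in> X"
  have "word_prefix N w \<frown> word_suffix N w \<in> cyl A X"
    using w word_suffix_in_omega_strings by (intro conc_in_cyl) auto
  then show "w \<in> cyl A X" by simp
qed

lemma Cuntz_memI:
  assumes fin: "finite X" and X: "X \<subseteq> lists A" "prefix_code X"
    and Y: "f1 ` X \<subseteq> lists A" "prefix_code (f1 ` X)" and inj: "inj_on f1 X"
    and dom: "dom f = cyl A X"
    and f: "\<And>x s. x \<in> X \<Longrightarrow> s \<in> omega_strings A \<Longrightarrow> f (x \<frown> s) = Some (f1 x \<frown> s)"
  shows "f \<in> Cuntz A"
proof -
  have "ran f = cyl A (f1 ` X)"
  proof (intro equalityI subsetI)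
    fix y assume "y \<in> ran f"
    then obtain w where w: "f w = Some y" unfolding ran_def by blast
    then obtain x s where xs: "w = x \<frown> s" "x \<in> X" "s \<in> omega_strings A"
      using dom unfolding cyl_def by blast
    then have "y = f1 x \<frown> s" using f w by simp
    then show "y \<in> cyl A (f1 ` X)" using xs unfolding cyl_def by blast
  next
    fix y assume "y \<in> cyl A (f1 ` X)"
    then obtain x s where "y = f1 x \<frown> s" "x \<in> X" "s \<in> omega_strings A" unfolding cyl_def by blast
    then show "y \<in> ran f" using f by (auto intro: ranI)
  qed
  moreover have "inj_on f (dom f)"
  proof (rule inj_onI)
    fix w1 w2 assume w: "w1 \<in> dom f" "w2 \<in> dom f" "f w1 = f w2"
    obtain x1 s1 where 1: "w1 = x1 \<frown> s1" "x1 \<in> X" "s1 \<in> omega_strings A"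
      using w(1) dom unfolding cyl_def by blast
    obtain x2 s2 where 2: "w2 = x2 \<frown> s2" "x2 \<in> X" "s2 \<in> omega_strings A"
      using w(2) dom unfolding cyl_def by blast
    have eq: "f1 x1 \<frown> s1 = f1 x2 \<frown> s2" using w(3) f 1 2 by simp
    then have "f1 x1 = f1 x2" using prefix_code_conc_eq[OF Y(2)] 1(2) 2(2) by blast
    then have "x1 = x2" using inj 1(2) 2(2) by (meson inj_onD)
    then show "w1 = w2" using eq 1(1) 2(1) by simp
  qed
  ultimately show ?thesis
    unfolding Cuntz_def using fin X Y dom f inj_on_imp_bij_betw[OF inj]
    by (intro CollectI exI[of _ X] exI[of _ "f1 ` X"] conjI exI[of _ f1]) auto
qed

lemma CT_image_prefix_code:
  assumes a: "a \<in> CT A" and N: "prefix_determined A N (dom a)"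
    and X: "X \<subseteq> dom a" and len: "\<And>x. x \<in> X \<Longrightarrow> length x = N"
  shows "prefix_code ((\<lambda>x. the (a x)) ` X)"
  unfolding prefix_code_def
proof (intro ballI impI notI)
  fix y y' assume yy: "y \<in> (\<lambda>x. the (a x)) ` X" "y' \<in> (\<lambda>x. the (a x)) ` X" "y \<noteq> y'" "prefix y y'"
  obtain x x' where x: "x \<in> X" "y = the (a x)" and x': "x' \<in> X" "y' = the (a x')"
    using yy(1,2) by blast
  have ax: "a x' = Some y'" using x' X by auto
  obtain z where z: "y' = y @ z" using yy(4) prefixE by blast
  have "y' \<in> lists A" using ax CT_ran_lists[OF a] by (auto intro: ranI)
  then have "z \<in> lists A" using z by simp
  then have "a (x @ z) = Some y'"
    using CT_long_append[OF a N _ _ \<open>z \<in> lists A\<close>, of x] x X len z by auto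
  then have "x @ z = x'" by (rule inj_on_dom_SomeD[OF CT_inj[OF a] _ ax])
  then have "z = []" using len[OF x(1)] len[OF x'(1)] by auto
  then show False using yy(3) z by simp
qed

lemma omega_map_Cuntz:
  assumes fin: "finite A" and a: "a \<in> CT A"
  shows "omega_map A a \<in> Cuntz A"
proof -
  obtain N where N: "prefix_determined A N (dom a)" using CT_prefix_determined_dom[OF a] .
  define X where "X = {x \<in> dom a. length x = N}"
  define f1 where "f1 = (\<lambda>x. the (a x))"
  have XA: "X \<subseteq> lists A" and len: "\<And>x. x \<in> X \<Longrightarrow> length x = N"
    unfolding X_def using CT_dom_lists[OF a] by auto
  have "finite X"
    by (rule finite_subset[OF _ finite_lists_length_le[OF fin, of N]])
       (use XA len in \<open>auto simp: in_lists_conv_set\<close>)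
  have aX: "a x = Some (f1 x)" if "x \<in> X" for x using that unfolding X_def f1_def by auto
  have omega: "omega_map A a (x \<frown> s) = Some (f1 x \<frown> s)" if "x \<in> X" "s \<in> omega_strings A" for x s
  proof -
    have "x \<in> lists A" using that(1) XA by blast
    moreover have "x \<in> dom a" using that(1) unfolding X_def by blast
    ultimately show ?thesis using omega_map_conc[OF a N _ _ that(2), of x] that(1) len aX by simp
  qed
  have "dom (omega_map A a) = cyl A X"
  proof (intro equalityI subsetI)
    fix w assume "w \<in> dom (omega_map A a)"
    then have w: "w \<in> omega_strings A" "omega_map A a w \<noteq> None" using omega_map_SomeD by blast+
    then have "word_prefix N w \<in> X"
      using omega_map_prefix[OF a N w(1)] unfolding X_def by (auto split: if_splits)
    then show "w \<in> cyl A X" using cyl_same_length[OF len XA] w(1) by blast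
  next
    fix w assume "w \<in> cyl A X"
    then show "w \<in> dom (omega_map A a)" using omega unfolding cyl_def by blast
  qed
  moreover have "inj_on f1 X"
  proof (rule inj_onI)
    fix x x' assume "x \<in> X" "x' \<in> X" "f1 x = f1 x'"
    then have "a x = Some (f1 x')" "a x' = Some (f1 x')" using aX by auto
    then show "x = x'" by (rule inj_on_dom_SomeD[OF CT_inj[OF a]])
  qed
  moreover have "f1 ` X \<subseteq> lists A" using CT_ran_lists[OF a] aX by (auto intro: ranI)
  moreover have "prefix_code (f1 ` X)"
    unfolding f1_def by (rule CT_image_prefix_code[OF a N]) (auto simp: X_def)
  ultimately show ?thesis
    using Cuntz_memI[OF \<open>finite X\<close> XA prefix_code_same_length[OF len]] omega by blast
qed

definition code_extension ::
    "'a set \<Rightarrow> 'a list set \<Rightarrow> ('a list \<Rightarrow> 'a list) \<Rightarrow> 'a list \<Rightarrow> 'a list option" where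
  "code_extension A X f v =
     (if v \<in> extensions A X
      then let x = THE x. x \<in> X \<and> prefix x v in Some (f x @ drop (length x) v)
      else None)"

lemma dom_code_extension: "dom (code_extension A X f) = extensions A X"
  unfolding code_extension_def dom_def by (auto simp: Let_def)

lemma code_extension_append:
  assumes "prefix_code X" and "x \<in> X" and "z \<in> lists A"
  shows "code_extension A X f (x @ z) = Some (f x @ z)"
proof -
  have "(THE x'. x' \<in> X \<and> prefix x' (x @ z)) = x"
  proof (rule the_equality)
    fix x' assume "x' \<in> X \<and> prefix x' (x @ z)"
    then show "x' = x" using prefix_code_unique[OF assms(1) _ assms(2), of x' "x @ z"] by simp
  qed (simp add: assms(2))
  then show ?thesis using append_in_extensions[OF assms(2,3)] unfolding code_extension_def by simp
qed

lemma ran_code_extension: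
  assumes "prefix_code X" and bij: "bij_betw f X Y"
  shows "ran (code_extension A X f) = extensions A Y"
proof (intro equalityI subsetI)
  fix y assume "y \<in> ran (code_extension A X f)"
  then obtain v where av: "code_extension A X f v = Some y" unfolding ran_def by blast
  then have "v \<in> extensions A X" using dom_code_extension by blast
  then obtain x z where v: "v = x @ z" "x \<in> X" "z \<in> lists A" by blast
  then have "y = f x @ z" using code_extension_append[OF assms(1)] av by simp
  moreover have "f x \<in> Y" using bij v(2) bij_betwE by blast
  ultimately show "y \<in> extensions A Y" using append_in_extensions v(3) by blast
next
  fix y assume "y \<in> extensions A Y"
  then obtain y0 z where y: "y = y0 @ z" "y0 \<in> Y" "z \<in> lists A" by blast
  moreover obtain x where "x \<in> X" "y0 = f x" using bij y(2) unfolding bij_betw_def by blast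
  ultimately have "code_extension A X f (x @ z) = Some y"
    using code_extension_append[OF assms(1)] by simp
  then show "y \<in> ran (code_extension A X f)" by (rule ranI)
qed

lemma code_extension_CT:
  assumes X: "finite X" "X \<subseteq> lists A" "prefix_code X"
    and Y: "finite Y" "Y \<subseteq> lists A" "prefix_code Y" and bij: "bij_betw f X Y"
  shows "code_extension A X f \<in> CT A"
  unfolding CT_def permissible_def
proof (intro CollectI conjI ballI impI)
  let ?a = "code_extension A X f"
  note app = code_extension_append[OF X(3)] and dom = dom_code_extension[of A X f]
    and ran = ran_code_extension[OF X(3) bij, of A]
  show "definite A (dom ?a)" "definite A (ran ?a)"
    unfolding dom ran using definite_extensions X(1,2) Y(1,2) by blast+
  show "inj_on ?a (dom ?a)"
  proof (rule inj_onI)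
    fix v1 v2 assume v: "v1 \<in> dom ?a" "v2 \<in> dom ?a" "?a v1 = ?a v2"
    obtain x1 z1 where 1: "v1 = x1 @ z1" "x1 \<in> X" "z1 \<in> lists A" using v(1) dom by blast
    obtain x2 z2 where 2: "v2 = x2 @ z2" "x2 \<in> X" "z2 \<in> lists A" using v(2) dom by blast
    have eq: "f x1 @ z1 = f x2 @ z2" using v(3) app 1 2 by simp
    have "prefix (f x1) (f x1 @ z1)" by simp
    moreover have "prefix (f x2) (f x1 @ z1)" unfolding eq by simp
    moreover have "f x1 \<in> Y" "f x2 \<in> Y" using bij 1(2) 2(2) bij_betwE by blast+
    ultimately have "f x1 = f x2" using prefix_code_unique[OF Y(3)] by blast
    moreover from this have "x1 = x2" using bij 1(2) 2(2) unfolding bij_betw_def by (meson inj_onD)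
    ultimately show "v1 = v2" using eq 1 2 by simp
  qed
  fix v assume "v \<in> dom ?a"
  then obtain x z where v: "v = x @ z" "x \<in> X" "z \<in> lists A" using dom by blast
  have "the (?a v) \<in> ran ?a" using \<open>v \<in> dom ?a\<close> by (auto intro: ranI)
  then show "unbounded A (dom ?a) v \<longleftrightarrow> unbounded A (ran ?a) (the (?a v))"
    using extensions_unbounded \<open>v \<in> dom ?a\<close> unfolding dom ran by blast
  fix y assume "y \<in> lists A"
  then show "?a (v @ y) = Some (the (?a v) @ y)" using app v by simp
qed

lemma omega_map_outside_cyl:
  assumes "dom a \<subseteq> extensions A X" and "w \<notin> cyl A X"
  shows "omega_map A a w = None"
proof (rule ccontr)
  assume "omega_map A a w \<noteq> None"
  then obtain k where w: "w \<in> omega_strings A" and k: "unbounded A (dom a) (word_prefix k w)"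
    using omega_map_SomeD by blast
  then have "word_prefix k w \<in> extensions A X" using assms(1) unfolding unbounded_def by blast
  then obtain x z where xz: "word_prefix k w = x @ z" "x \<in> X" "z \<in> lists A" by blast
  have "x \<frown> (z \<frown> word_suffix k w) = (x @ z) \<frown> word_suffix k w" by simp
  also have "\<dots> = word_prefix k w \<frown> word_suffix k w" by (simp only: xz(1))
  also have "\<dots> = w" by simp
  finally have w_eq: "x \<frown> (z \<frown> word_suffix k w) = w" .
  have "x \<frown> (z \<frown> word_suffix k w) \<in> cyl A X"
    using conc_in_omega_strings[OF xz(3) word_suffix_in_omega_strings[OF w]]
    by (rule conc_in_cyl[OF xz(2)])
  then show False using assms(2) unfolding w_eq by contradiction
qed

lemma Cuntz_eq_omega_map:
  assumes "f \<in> Cuntz A"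
  obtains a where "a \<in> CT A" and "omega_map A a = f"
proof -
  obtain X Y f1 where XY: "finite X" "finite Y" "X \<subseteq> lists A" "Y \<subseteq> lists A" "prefix_code X"
      "prefix_code Y" and dom: "dom f = cyl A X" and bij: "bij_betw f1 X Y"
    and f: "\<forall>x\<in>X. \<forall>s\<in>omega_strings A. f (x \<frown> s) = Some (f1 x \<frown> s)"
    using assms unfolding Cuntz_def mem_Collect_eq by iprover
  let ?a = "code_extension A X f1"
  have a: "?a \<in> CT A" by (rule code_extension_CT[OF XY(1,3,5) XY(2,4,6) bij])
  have "omega_map A ?a w = f w" for w
  proof (cases "w \<in> cyl A X")
    case True
    then obtain x s where xs: "w = x \<frown> s" "x \<in> X" "s \<in> omega_strings A" unfolding cyl_def by blast
    have "x \<in> lists A" using xs(2) XY(3) by blast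
    then have w: "w \<in> omega_strings A" using xs conc_in_omega_strings by blast
    have "unbounded A (dom ?a) x"
      using extensions_unbounded[OF append_in_extensions[OF xs(2), of "[]"]]
      by (simp add: dom_code_extension)
    then have "omega_map A ?a w = Some (the (?a x) \<frown> s)"
      using omega_map_unbounded[OF a w, of "length x"] xs(1) by simp
    then show ?thesis using code_extension_append[OF XY(5) xs(2), of "[]"] f xs by simp
  next
    case False
    then have "omega_map A ?a w = None"
      by (intro omega_map_outside_cyl) (simp_all add: dom_code_extension)
    moreover have "w \<notin> dom f" using False dom by simp
    then have "f w = None" by (simp add: domIff)
    ultimately show ?thesis by simp
  qed
  then show ?thesis using that a by blast
qed

lemma omega_map_image_CT: "finite A \<Longrightarrow> omega_map A ` CT A = Cuntz A"
  using omega_map_Cuntz Cuntz_eq_omega_map by (metis imageI image_subsetI subsetI subset_antisym)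

lemma omega_map_map_comp:
  assumes fin: "finite A" and a: "a \<in> CT A" and b: "b \<in> CT A"
  shows "omega_map A (a \<circ>\<^sub>m b) = omega_map A a \<circ>\<^sub>m omega_map A b"
proof
  fix w
  let ?c = "a \<circ>\<^sub>m b"
  have c: "?c \<in> CT A" by (rule map_comp_CT[OF fin a b])
  obtain Na where Na: "prefix_determined A Na (dom a)" using CT_prefix_determined_dom[OF a] .
  obtain Nb where Nb: "prefix_determined A Nb (dom b)" using CT_prefix_determined_dom[OF b] .
  obtain Nc where Nc: "prefix_determined A Nc (dom ?c)" using CT_prefix_determined_dom[OF c] .
  define K where "K = Nb + Na + Nc"
  have Kb: "prefix_determined A K (dom b)" and Kc: "prefix_determined A K (dom ?c)"
    using prefix_determined_mono[OF Nb] prefix_determined_mono[OF Nc] unfolding K_def by simp_all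
  show "omega_map A ?c w = (omega_map A a \<circ>\<^sub>m omega_map A b) w"
  proof (cases "w \<in> omega_strings A")
    case w: True
    define p where "p = word_prefix K w"
    define s where "s = word_suffix K w"
    have s: "s \<in> omega_strings A" unfolding s_def by (rule word_suffix_in_omega_strings[OF w])
    have hc: "omega_map A ?c w = (if p \<in> dom ?c then Some (the (?c p) \<frown> s) else None)"
      unfolding p_def s_def by (rule omega_map_prefix[OF c Kc w])
    have hb: "omega_map A b w = (if p \<in> dom b then Some (the (b p) \<frown> s) else None)"
      unfolding p_def s_def by (rule omega_map_prefix[OF b Kb w])
    show ?thesis
    proof (cases "p \<in> dom b")
      case True
      define u where "u = the (b p)"
      have bp: "b p = Some u" using True unfolding u_def by auto
      have lp: "length p = K" unfolding p_def by simp
      have "b p = Some (the (b (take Nb p)) @ drop Nb p)"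
        by (rule CT_take_drop(2)[OF b Nb True]) (simp add: lp K_def)
      then have "Na \<le> length u" using bp lp unfolding K_def by auto
      moreover have "u \<in> lists A" using CT_ran_lists[OF b] bp by (auto intro: ranI)
      ultimately have ha:
        "omega_map A a (u \<frown> s) = (if u \<in> dom a then Some (the (a u) \<frown> s) else None)"
        using omega_map_conc[OF a Na _ _ s] by blast
      have "p \<in> dom ?c \<longleftrightarrow> u \<in> dom a" using bp True by (simp add: dom_map_comp)
      then show ?thesis using hc hb ha True bp by auto
    next
      case False
      then have "p \<notin> dom ?c" by (simp add: dom_map_comp)
      then show ?thesis using hc hb False by simp
    qed
  qed (simp add: omega_map_outside)
qed

section \<open>Idempotents, meets and the congruence\<close>

lemma dom_restrict_Some [simp]: "dom (Some |` L) = L"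
  by (auto simp: restrict_map_def split: if_splits)

lemma ran_restrict_Some [simp]: "ran (Some |` L) = L"
  by (auto simp: ran_def restrict_map_def)

lemma restrict_Some_eq_Some_iff: "(Some |` L) x = Some y \<longleftrightarrow> x \<in> L \<and> y = x"
  by (auto simp: restrict_map_def)

lemma restrict_Some_CT:
  assumes "definite A L"
  shows "Some |` L \<in> CT A"
  unfolding CT_def permissible_def
proof (intro CollectI conjI ballI impI)
  show "definite A (dom (Some |` L))" "definite A (ran (Some |` L))"
    using assms by simp_all
  show "inj_on (Some |` L) (dom (Some |` L))"
    by (rule inj_onI) (auto simp: restrict_Some_eq_Some_iff)
  fix x assume "x \<in> dom (Some |` L)"
  then show "unbounded A (dom (Some |` L)) x \<longleftrightarrow> unbounded A (ran (Some |` L)) (the ((Some |` L) x))"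
    by simp
  fix z assume "unbounded A (dom (Some |` L)) x" and "z \<in> lists A"
  then have "x @ z \<in> L" using unboundedD by fastforce
  then show "(Some |` L) (x @ z) = Some (the ((Some |` L) x) @ z)"
    using \<open>x \<in> dom (Some |` L)\<close> by simp
qed

lemma idems_CT_iff: "e \<in> idems (CT A) \<longleftrightarrow> (\<exists>L. definite A L \<and> e = Some |` L)"
proof
  assume "e \<in> idems (CT A)"
  then have e: "e \<in> CT A" "e \<circ>\<^sub>m e = e" unfolding idems_def by auto
  have "e = Some |` dom e"
  proof
    fix x show "e x = (Some |` dom e) x"
    proof (cases "e x")
      case (Some y)
      then have "e y = Some y" using e(2) map_comp_simps(2)[of e x y e] by simp
      then have "x = y" using inj_on_dom_SomeD[OF CT_inj[OF e(1)] Some] by simp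
      then show ?thesis using Some by (simp add: domI)
    qed (simp add: domIff)
  qed
  then show "\<exists>L. definite A L \<and> e = Some |` L" using CT_dom_definite[OF e(1)] by blast
next
  assume "\<exists>L. definite A L \<and> e = Some |` L"
  then obtain L where "definite A L" "e = Some |` L" by blast
  moreover have "(Some |` L) \<circ>\<^sub>m (Some |` L) = Some |` L"
    by (rule ext) (simp add: map_comp_def restrict_map_def)
  ultimately show "e \<in> idems (CT A)" unfolding idems_def using restrict_Some_CT by blast
qed

lemma map_le_restrict_Some_iff: "Some |` L1 \<subseteq>\<^sub>m Some |` L2 \<longleftrightarrow> L1 \<subseteq> L2"
  unfolding map_le_def by (auto simp: restrict_map_def split: if_splits)

lemma glb_in_eqI:
  assumes "c \<in> S" "c \<subseteq>\<^sub>m a" "c \<subseteq>\<^sub>m b" and "\<And>d. d \<in> S \<Longrightarrow> d \<subseteq>\<^sub>m a \<Longrightarrow> d \<subseteq>\<^sub>m b \<Longrightarrow> d \<subseteq>\<^sub>m c"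
  shows "glb_in S a b = c"
  unfolding glb_in_def using assms by (blast intro: map_le_antisym)

lemma lub_in_eqI:
  assumes "c \<in> S" "a \<subseteq>\<^sub>m c" "b \<subseteq>\<^sub>m c" and "\<And>d. d \<in> S \<Longrightarrow> a \<subseteq>\<^sub>m d \<Longrightarrow> b \<subseteq>\<^sub>m d \<Longrightarrow> c \<subseteq>\<^sub>m d"
  shows "lub_in S a b = c"
  unfolding lub_in_def using assms by (blast intro: map_le_antisym)

lemma
  assumes "finite A" and "definite A L1" and "definite A L2"
  shows glb_in_idems: "glb_in (idems (CT A)) (Some |` L1) (Some |` L2) = Some |` (L1 \<inter> L2)"
    and lub_in_idems: "lub_in (idems (CT A)) (Some |` L1) (Some |` L2) = Some |` (L1 \<union> L2)"
proof -
  note ops = definite_Int_Un_Diff[OF assms]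
  show "glb_in (idems (CT A)) (Some |` L1) (Some |` L2) = Some |` (L1 \<inter> L2)"
    by (rule glb_in_eqI) (use ops(1) in \<open>auto simp: idems_CT_iff map_le_restrict_Some_iff\<close>)
  show "lub_in (idems (CT A)) (Some |` L1) (Some |` L2) = Some |` (L1 \<union> L2)"
    by (rule lub_in_eqI) (use ops(2) in \<open>auto simp: idems_CT_iff map_le_restrict_Some_iff\<close>)
qed

lemma rel_compl_idems:
  assumes fin: "finite A" and L: "definite A L1" "definite A L2" and "L2 \<subseteq> L1"
  shows "rel_compl (CT A) (Some |` L1) (Some |` L2) = Some |` (L1 - L2)"
  unfolding rel_compl_def
proof (rule the_equality)
  have D: "definite A (L1 - L2)" using definite_Int_Un_Diff(3)[OF fin L] .
  have "(L1 - L2) \<inter> L2 = {}" "(L1 - L2) \<union> L2 = L1" using \<open>L2 \<subseteq> L1\<close> by auto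
  then show "Some |` (L1 - L2) \<in> idems (CT A) \<and> Some |` (L1 - L2) \<subseteq>\<^sub>m Some |` L1 \<and>
      glb_in (idems (CT A)) (Some |` (L1 - L2)) (Some |` L2) = Map.empty \<and>
      lub_in (idems (CT A)) (Some |` (L1 - L2)) (Some |` L2) = Some |` L1"
    using D glb_in_idems[OF fin D L(2)] lub_in_idems[OF fin D L(2)]
    by (auto simp: idems_CT_iff map_le_restrict_Some_iff)
next
  fix g assume g: "g \<in> idems (CT A) \<and> g \<subseteq>\<^sub>m Some |` L1 \<and>
      glb_in (idems (CT A)) g (Some |` L2) = Map.empty \<and>
      lub_in (idems (CT A)) g (Some |` L2) = Some |` L1"
  then obtain G where G: "definite A G" "g = Some |` G" unfolding idems_CT_iff by blast
  have "Some |` (G \<inter> L2) = Map.empty" "Some |` (G \<union> L2) = Some |` L1"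
    using g glb_in_idems[OF fin G(1) L(2)] lub_in_idems[OF fin G(1) L(2)] G(2) by simp_all
  then have "dom (Some |` (G \<inter> L2)) = {}" "dom (Some |` (G \<union> L2)) = dom (Some |` L1)" by simp_all
  then have "G = L1 - L2" by auto
  then show "g = Some |` (L1 - L2)" using G(2) by simp
qed

lemma map_comp_restrict_Some: "a \<circ>\<^sub>m (Some |` D) = a |` D"
  by (rule ext) (simp add: map_comp_def restrict_map_def)

lemma restrict_CT: "finite A \<Longrightarrow> a \<in> CT A \<Longrightarrow> definite A D \<Longrightarrow> a |` D \<in> CT A"
  using map_comp_CT[OF _ _ restrict_Some_CT] by (simp add: map_comp_restrict_Some)

lemma sdiff_CT:
  assumes fin: "finite A" and a: "a \<in> CT A" and m: "m \<in> CT A" and "m \<subseteq>\<^sub>m a"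
  shows "sdiff (CT A) a m = a |` (dom a - dom m)"
proof -
  have "rel_compl (CT A) (dd a) (dd m) = Some |` (dom a - dom m)"
    unfolding dd_eq_restrict[OF CT_inj[OF a]] dd_eq_restrict[OF CT_inj[OF m]]
    using rel_compl_idems[OF fin CT_dom_definite[OF a] CT_dom_definite[OF m]]
      map_le_implies_dom_le[OF \<open>m \<subseteq>\<^sub>m a\<close>] by blast
  then show ?thesis unfolding sdiff_def by (simp add: map_comp_restrict_Some)
qed

definition agree_set :: "('b \<Rightarrow> 'b option) \<Rightarrow> ('b \<Rightarrow> 'b option) \<Rightarrow> 'b set" where
  "agree_set a b = {x \<in> dom a \<inter> dom b. a x = b x}"

lemma agree_set_commute: "agree_set a b = agree_set b a"
  unfolding agree_set_def by auto

lemma agree_set_definite: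
  assumes fin: "finite A" and a: "a \<in> CT A" and b: "b \<in> CT A"
  shows "definite A (agree_set a b)"
proof -
  obtain N where Da: "prefix_determined A N (dom a)" and Db: "prefix_determined A N (dom b)"
    using common_prefix_determined[OF a b] .
  have "prefix_determined A N (agree_set a b)"
    unfolding prefix_determined_def
  proof (intro ballI impI)
    fix x assume xA: "x \<in> lists A" and len: "N \<le> length x"
    define t where "t = take N x"
    have dom_iff: "x \<in> dom a \<longleftrightarrow> t \<in> dom a" "x \<in> dom b \<longleftrightarrow> t \<in> dom b"
      unfolding t_def using prefix_determinedD[OF Da xA len] prefix_determinedD[OF Db xA len] .
    show "x \<in> agree_set a b \<longleftrightarrow> take N x \<in> agree_set a b"
    proof (cases "x \<in> dom a \<and> x \<in> dom b")
      case True
      have "a x = Some (the (a t) @ drop N x)" "b x = Some (the (b t) @ drop N x)"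
        unfolding t_def using CT_take_drop(2)[OF a Da _ len] CT_take_drop(2)[OF b Db _ len] True
        by auto
      moreover have "t \<in> dom a" "t \<in> dom b" using True dom_iff by blast+
      ultimately have "a x = b x \<longleftrightarrow> a t = b t" by (auto simp: domIff)
      then show ?thesis using True \<open>t \<in> dom a\<close> unfolding agree_set_def t_def by auto
    next
      case False
      then show ?thesis using dom_iff unfolding agree_set_def t_def by (auto simp: domIff)
    qed
  qed
  moreover have "agree_set a b \<subseteq> lists A" unfolding agree_set_def using CT_dom_lists[OF a] by blast
  ultimately show ?thesis using prefix_determined_definite[OF fin] by blast
qed

lemma restrict_agree_set:
  shows "a |` agree_set a b \<subseteq>\<^sub>m a" and "a |` agree_set a b \<subseteq>\<^sub>m b"
    and "dom (a |` agree_set a b) = agree_set a b"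
  unfolding map_le_def agree_set_def by auto

lemma glb_in_CT:
  assumes fin: "finite A" and a: "a \<in> CT A" and b: "b \<in> CT A"
  shows "glb_in (CT A) a b = a |` agree_set a b"
proof (rule glb_in_eqI)
  show "a |` agree_set a b \<in> CT A" by (rule restrict_CT[OF fin a agree_set_definite[OF fin a b]])
  show "a |` agree_set a b \<subseteq>\<^sub>m a" "a |` agree_set a b \<subseteq>\<^sub>m b" by (fact restrict_agree_set)+
  fix d assume d: "d \<subseteq>\<^sub>m a" "d \<subseteq>\<^sub>m b"
  show "d \<subseteq>\<^sub>m a |` agree_set a b"
    unfolding map_le_def
  proof
    fix x assume x: "x \<in> dom d"
    then have "d x = a x" "d x = b x" using d unfolding map_le_def by blast+
    then have "x \<in> agree_set a b" using x unfolding agree_set_def by (simp add: domIff)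
    then show "d x = (a |` agree_set a b) x" using \<open>d x = a x\<close> by simp
  qed
qed

lemma restrict_in_If_iff:
  assumes a: "a \<in> CT A" and "D \<subseteq> dom a"
  shows "a |` D \<in> If A \<longleftrightarrow> finite D"
proof -
  have "dom (a |` D) = D" using assms(2) by auto
  moreover have "ran (a |` D) \<subseteq> lists A"
    using CT_ran_lists[OF a] ran_restrictD by (fastforce intro: ranI)
  moreover have "inj_on a D" by (rule inj_on_subset[OF CT_inj[OF a] assms(2)])
  then have "inj_on (a |` D) D" by (simp add: inj_on_def)
  moreover have "D \<subseteq> lists A" using assms(2) CT_dom_lists[OF a] by blast
  ultimately show ?thesis unfolding If_def by auto
qed

lemma epsI_CT_iff:
  assumes fin: "finite A" and a: "a \<in> CT A" and b: "b \<in> CT A"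
  shows "(a, b) \<in> epsI (CT A) (If A) \<longleftrightarrow>
    finite (dom a - agree_set a b) \<and> finite (dom b - agree_set a b)"
proof -
  let ?m = "a |` agree_set a b"
  have m: "?m \<in> CT A" by (rule restrict_CT[OF fin a agree_set_definite[OF fin a b]])
  have dom_m: "dom ?m = agree_set a b" by (rule restrict_agree_set(3))
  have "sdiff (CT A) a ?m = a |` (dom a - agree_set a b)"
    using sdiff_CT[OF fin a m restrict_agree_set(1)] unfolding dom_m .
  moreover have "sdiff (CT A) b ?m = b |` (dom b - agree_set a b)"
    using sdiff_CT[OF fin b m restrict_agree_set(2)] unfolding dom_m .
  ultimately show ?thesis
    unfolding epsI_def using a b restrict_in_If_iff[OF a] restrict_in_If_iff[OF b]
    by (simp add: glb_in_CT[OF fin a b])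
qed

section \<open>The kernel of the action\<close>

text \<open>The only place where the two letters, i.e. n \<ge> 2, are needed.\<close>

lemma conc_eq_by_two_letters:
  assumes c: "c0 \<in> A" "c1 \<in> A" "c0 \<noteq> c1"
    and eq: "\<And>s. s \<in> omega_strings A \<Longrightarrow> u \<frown> s = v \<frown> s"
  shows "u = v"
proof -
  have const: "(\<lambda>_. c) \<in> omega_strings A" if "c \<in> A" for c
    using that unfolding omega_strings_def by simp
  have False if "length x < length y" and xy: "\<And>s. s \<in> omega_strings A \<Longrightarrow> x \<frown> s = y \<frown> s" for x y
  proof -
    have "c = y ! length x" if "c \<in> A" for c
      using fun_cong[OF xy[OF const[OF that]], of "length x"] \<open>length x < length y\<close> by simp
    then show False using c by metis
  qed
  then have "length u = length v" using eq by (metis linorder_neqE_nat)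
  then show ?thesis using eq[OF const[OF c(1)]] by simp
qed

lemma infinite_if_extensions_subset:
  assumes "c \<in> A" and "\<And>z. z \<in> lists A \<Longrightarrow> p @ z \<in> S"
  shows "infinite S"
proof
  assume "finite S"
  have "inj (\<lambda>k. p @ replicate k c)" by (rule injI) simp
  moreover have "replicate k c \<in> lists A" for k using assms(1) by (induction k) auto
  then have "range (\<lambda>k. p @ replicate k c) \<subseteq> S" using assms(2) by blast
  ultimately show False using \<open>finite S\<close> by (meson finite_imageD finite_subset infinite_UNIV_nat)
qed

lemma disagreement_infinite:
  assumes a: "a \<in> CT A" and b: "b \<in> CT A"
    and Da: "prefix_determined A N (dom a)" and Db: "prefix_determined A N (dom b)"
    and p: "p \<in> lists A" "length p = N" "p \<in> dom a" "p \<notin> agree_set a b" and "c \<in> A"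
  shows "infinite (dom a - agree_set a b)"
proof (rule infinite_if_extensions_subset[OF \<open>c \<in> A\<close>])
  fix z assume z: "z \<in> lists A"
  have az: "a (p @ z) = Some (the (a p) @ z)"
    by (rule CT_long_append[OF a Da p(3) _ z]) (simp add: p(2))
  have "p @ z \<notin> agree_set a b"
  proof
    assume pz: "p @ z \<in> agree_set a b"
    then have "p @ z \<in> dom b" unfolding agree_set_def by blast
    then have pb: "p \<in> dom b" using prefix_determinedD[OF Db, of "p @ z"] p(1,2) z by simp
    have "b (p @ z) = Some (the (b p) @ z)"
      by (rule CT_long_append[OF b Db pb _ z]) (simp add: p(2))
    then have "a p = b p" using pz az p(3) pb unfolding agree_set_def by (auto simp: domIff)
    then show False using p(3,4) pb unfolding agree_set_def by blast
  qed
  then show "p @ z \<in> dom a - agree_set a b" using az by blast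
qed

lemma omega_map_eq_imp_finite_disagreement:
  assumes fin: "finite A" and a: "a \<in> CT A" and b: "b \<in> CT A"
    and c: "c0 \<in> A" "c1 \<in> A" "c0 \<noteq> c1" and eq: "omega_map A a = omega_map A b"
  shows "finite (dom a - agree_set a b)"
proof -
  obtain N where Da: "prefix_determined A N (dom a)" and Db: "prefix_determined A N (dom b)"
    using common_prefix_determined[OF a b] .
  have "length x < N" if x: "x \<in> dom a - agree_set a b" for x
  proof (rule ccontr)
    assume "\<not> length x < N"
    then have len: "N \<le> length x" by simp
    define t where "t = take N x"
    have xA: "x \<in> lists A" using x CT_dom_lists[OF a] by blast
    have tA: "t \<in> lists A" "N \<le> length t" unfolding t_def using take_in_lists[OF xA] len by simp_all
    have ta: "t \<in> dom a" unfolding t_def using CT_take_drop(1)[OF a Da _ len] x by blast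
    have omega: "Some (the (a t) \<frown> s) = (if t \<in> dom b then Some (the (b t) \<frown> s) else None)"
      if "s \<in> omega_strings A" for s
      using omega_map_conc[OF a Da tA that] omega_map_conc[OF b Db tA that] eq ta by simp
    have tb: "t \<in> dom b"
      using omega[of "\<lambda>_. c0"] c(1) unfolding omega_strings_def by (auto split: if_splits)
    have "the (a t) = the (b t)" by (rule conc_eq_by_two_letters[OF c]) (use omega tb in simp)
    moreover have xb: "x \<in> dom b" using tb prefix_determinedD[OF Db xA len] unfolding t_def by blast
    ultimately have "a x = b x"
      using CT_take_drop(2)[OF a Da _ len] CT_take_drop(2)[OF b Db xb len] x unfolding t_def by auto
    then show False using x xb unfolding agree_set_def by blast
  qed
  then have "dom a - agree_set a b \<subseteq> {xs. set xs \<subseteq> A \<and> length xs \<le> N}"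
    using CT_dom_lists[OF a] by (fastforce simp: in_lists_conv_set)
  then show ?thesis by (rule finite_subset) (rule finite_lists_length_le[OF fin])
qed

lemma finite_disagreement_imp_omega_map_eq:
  assumes a: "a \<in> CT A" and b: "b \<in> CT A" and "c \<in> A"
    and fa: "finite (dom a - agree_set a b)" and fb: "finite (dom b - agree_set a b)"
  shows "omega_map A a = omega_map A b"
proof
  fix w
  obtain N where Da: "prefix_determined A N (dom a)" and Db: "prefix_determined A N (dom b)"
    using common_prefix_determined[OF a b] .
  show "omega_map A a w = omega_map A b w"
  proof (cases "w \<in> omega_strings A")
    case w: True
    define p where "p = word_prefix N w"
    have p: "p \<in> lists A" "length p = N"
      unfolding p_def using subsequence_in_lists[OF w] by simp_all
    have "p \<in> agree_set a b" if "p \<in> dom a"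
      using disagreement_infinite[OF a b Da Db p that _ \<open>c \<in> A\<close>] fa by blast
    moreover have "p \<in> agree_set a b" if "p \<in> dom b"
      using disagreement_infinite[OF b a Db Da p that _ \<open>c \<in> A\<close>] fb agree_set_commute[of a b]
      by auto
    ultimately show ?thesis
      using omega_map_prefix[OF a Da w] omega_map_prefix[OF b Db w]
      unfolding p_def[symmetric] agree_set_def by auto
  qed (simp add: omega_map_outside)
qed

lemma omega_map_eq_iff:
  assumes "finite A" and "a \<in> CT A" and "b \<in> CT A" and "c0 \<in> A" "c1 \<in> A" "c0 \<noteq> c1"
  shows "omega_map A a = omega_map A b \<longleftrightarrow>
    finite (dom a - agree_set a b) \<and> finite (dom b - agree_set a b)"
  using omega_map_eq_imp_finite_disagreement[OF assms]
    omega_map_eq_imp_finite_disagreement[OF assms(1,3,2,4-6)]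
    finite_disagreement_imp_omega_map_eq[OF assms(2,3,4)] agree_set_commute[of a b]
  by metis

lemma epsI_CT_iff_omega_map_eq:
  assumes "finite A" and "c0 \<in> A" "c1 \<in> A" "c0 \<noteq> c1"
  shows "(a, b) \<in> epsI (CT A) (If A) \<longleftrightarrow>
    a \<in> CT A \<and> b \<in> CT A \<and> omega_map A a = omega_map A b"
  using epsI_CT_iff[OF assms(1)] omega_map_eq_iff[OF assms(1) _ _ assms(2-4)]
  unfolding epsI_def by blast

lemma quotient_by_kernel:
  assumes E: "\<And>a b. (a, b) \<in> E \<longleftrightarrow> a \<in> S \<and> b \<in> S \<and> h a = h b" and T: "h ` S = T"
  shows "bij_betw (\<lambda>C. the_elem (h ` C)) (S // E) T"
    and "\<And>a. a \<in> S \<Longrightarrow> the_elem (h ` (E `` {a})) = h a"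
proof -
  have class_eq: "E `` {a} = {b \<in> S. h b = h a}" if "a \<in> S" for a using E that by auto
  then have "h ` (E `` {a}) = {h a}" if "a \<in> S" for a using that by auto
  then show class_value: "the_elem (h ` (E `` {a})) = h a" if "a \<in> S" for a using that by simp
  show "bij_betw (\<lambda>C. the_elem (h ` C)) (S // E) T"
  proof (rule bij_betw_imageI)
    show "inj_on (\<lambda>C. the_elem (h ` C)) (S // E)"
    proof (rule inj_onI)
      fix C D assume "C \<in> S // E" "D \<in> S // E" and eq: "the_elem (h ` C) = the_elem (h ` D)"
      then obtain a b where ab: "a \<in> S" "C = E `` {a}" "b \<in> S" "D = E `` {b}"
        unfolding quotient_def by blast
      then have "h a = h b" using eq class_value by simp
      then show "C = D" using ab class_eq by simp
    qed
    show "(\<lambda>C. the_elem (h ` C)) ` (S // E) = T"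
    proof (intro equalityI subsetI)
      fix t assume "t \<in> (\<lambda>C. the_elem (h ` C)) ` (S // E)"
      then obtain a where "a \<in> S" "t = the_elem (h ` (E `` {a}))" unfolding quotient_def by blast
      then show "t \<in> T" using class_value T by auto
    next
      fix t assume "t \<in> T"
      then obtain a where "a \<in> S" "t = h a" using T by blast
      then have "E `` {a} \<in> S // E" "t = the_elem (h ` (E `` {a}))"
        using class_value unfolding quotient_def by auto
      then show "t \<in> (\<lambda>C. the_elem (h ` C)) ` (S // E)" by blast
    qed
  qed
qed

theorem proposition3p17:
  fixes A :: "'a set" and n :: nat
  assumes "finite A" and "card A = n" and "n \<ge> 2"
  shows "\<exists>\<Phi>. bij_betw \<Phi> (CT A // epsI (CT A) (If A)) (Cuntz A) \<and>
           (\<forall>a\<in>CT A. \<forall>b\<in>CT A.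
              \<Phi> (epsI (CT A) (If A) `` {a \<circ>\<^sub>m b}) =
              \<Phi> (epsI (CT A) (If A) `` {a}) \<circ>\<^sub>m \<Phi> (epsI (CT A) (If A) `` {b}))"
proof -
  let ?E = "epsI (CT A) (If A)" and ?\<Phi> = "\<lambda>C. the_elem (omega_map A ` C)"
  have "\<not> card A \<le> Suc 0" using assms(2,3) by simp
  then obtain c0 c1 where c: "c0 \<in> A" "c1 \<in> A" "c0 \<noteq> c1"
    using card_le_Suc0_iff_eq[OF assms(1)] by blast
  note quot = quotient_by_kernel[OF epsI_CT_iff_omega_map_eq[OF assms(1) c]
      omega_map_image_CT[OF assms(1)]]
  have "?\<Phi> (?E `` {a \<circ>\<^sub>m b}) = ?\<Phi> (?E `` {a}) \<circ>\<^sub>m ?\<Phi> (?E `` {b})"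
    if "a \<in> CT A" "b \<in> CT A" for a b
    using quot(2) that map_comp_CT[OF assms(1) that] omega_map_map_comp[OF assms(1) that] by simp
  then show ?thesis using quot(1) by blast
qed

end
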